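(* Let $f: \mathbb{R}^n \to \mathbb{R}^n$ be topical and $h \in \mathbb{R}$. Then $f$ has an eigenvector with eigenvalue $h$ (i.e. $f(v) = v + h$ for some $v \in \mathbb{R}^n$) if and only if there exists $x \in \mathbb{R}^n$ such that $\|f^k(x) - kh\|_\infty$ is bounded as $k \to \infty$.
   Context: $f$ is topical if $f(x+h) = f(x)+h$ for all $h\in\mathbb{R}$ (scalar added to each coordinate) and $x\le y$ componentwise implies $f(x)\le f(y)$. $\|\cdot\|_\infty$ is the supremum norm. *)

theory Defs
  imports "HOL-Analysis.Analysis"
begin

definition cvec :: "real \<Rightarrow> real ^ 'n" where
  "cvec h = (\<chi> i. h)"

definition topical :: "(real ^ 'n \<Rightarrow> real ^ 'n) \<Rightarrow> bool" where
  "topical f \<longleftrightarrow>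
     (\<forall>x h. f (x + cvec h) = f x + cvec h) \<and>
     (\<forall>x y. (\<forall>i. x $ i \<le> y $ i) \<longrightarrow> (\<forall>i. f x $ i \<le> f y $ i))"

definition supnorm :: "real ^ 'n \<Rightarrow> real" where
  "supnorm x = Max (range (\<lambda>i. \<bar>x $ i\<bar>))"

end

theory Submission
  imports Defs
begin

text \<open>
  Replacing \<open>f\<close> by the topical map \<open>g = f - h\<close> reduces the claim to: a topical map has a fixed
  point iff some orbit is bounded. Topical maps are nonexpansive for the sup norm, hence continuous.
  Given a bounded orbit \<open>g\<^sup>k x\<close>, the tail suprema \<open>s m = sup {g\<^sup>k x | k \<ge> m}\<close> decrease and satisfy
  \<open>s (m + 1) \<le> g (s m)\<close> by monotonicity, so their limit \<open>z\<close> (the limsup of the orbit) satisfies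
  \<open>z \<le> g z\<close>. Then \<open>g\<^sup>k z\<close> increases, stays bounded, and converges to a fixed point.
\<close>

lemma cvec_nth [simp]: "cvec h $ i = h"
  by (simp add: cvec_def)

lemma topical_add_cvec: "topical g \<Longrightarrow> g (x + cvec c) = g x + cvec c"
  unfolding topical_def by blast

lemma topical_mono: "topical g \<Longrightarrow> (\<And>j. x $ j \<le> y $ j) \<Longrightarrow> g x $ i \<le> g y $ i"
  unfolding topical_def by blast

lemma topical_le_add_cvec:
  assumes "topical g" "\<And>j. x $ j \<le> y $ j + c"
  shows "g x $ i \<le> g y $ i + c"
proof -
  have "g x $ i \<le> g (y + cvec c) $ i"
    by (rule topical_mono[OF assms(1)]) (simp add: assms(2))
  then show ?thesis
    using topical_add_cvec[OF assms(1)] by simp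
qed

lemma topical_funpow_le_add_cvec:
  assumes "topical g" "\<And>j. x $ j \<le> y $ j + c"
  shows "(g ^^ k) x $ i \<le> (g ^^ k) y $ i + c"
proof (induction k arbitrary: i)
  case 0
  then show ?case using assms(2) by simp
next
  case (Suc k)
  then show ?case
    using topical_le_add_cvec[OF assms(1), of "(g ^^ k) x" "(g ^^ k) y" c i] by simp
qed

lemma topical_minus_cvec:
  fixes f :: "real ^ 'n \<Rightarrow> real ^ 'n"
  assumes "topical f"
  shows "topical (\<lambda>y. f y - cvec h)"
  unfolding topical_def
proof (intro conjI allI impI)
  fix x c
  show "f (x + cvec c) - cvec h = f x - cvec h + cvec c"
    using topical_add_cvec[OF assms] by simp
next
  fix x y :: "real ^ 'n" and i
  assume "\<forall>j. x $ j \<le> y $ j"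
  then show "(f x - cvec h) $ i \<le> (f y - cvec h) $ i"
    using topical_mono[OF assms] by simp
qed

lemma funpow_topical_minus_cvec:
  assumes "topical f"
  shows "((\<lambda>y. f y - cvec h) ^^ k) x = (f ^^ k) x - cvec (real k * h)"
proof (induction k)
  case 0
  then show ?case by (simp add: vec_eq_iff)
next
  case (Suc k)
  have minus_cvec: "(f ^^ k) x - cvec (real k * h) = (f ^^ k) x + cvec (- (real k * h))"
    by (simp add: vec_eq_iff)
  have "((\<lambda>y. f y - cvec h) ^^ Suc k) x = f ((f ^^ k) x + cvec (- (real k * h))) - cvec h"
    using Suc by (simp only: funpow.simps comp_apply minus_cvec)
  also have "\<dots> = (f ^^ Suc k) x + cvec (- (real k * h)) - cvec h"
    using topical_add_cvec[OF assms] by simp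
  finally show ?case
    by (simp add: vec_eq_iff algebra_simps)
qed

lemma supnorm_nth_le: "\<bar>x $ i\<bar> \<le> supnorm x"
  unfolding supnorm_def by (rule Max_ge) auto

lemma supnorm_le_norm: "supnorm x \<le> norm x"
  unfolding supnorm_def by (subst Max_le_iff) (auto intro: component_le_norm_cart)

lemma topical_nonexpansive:
  assumes "topical g"
  shows "\<bar>g x $ i - g y $ i\<bar> \<le> supnorm (x - y)"
proof -
  have "x $ j \<le> y $ j + supnorm (x - y)" "y $ j \<le> x $ j + supnorm (x - y)" for j
    using supnorm_nth_le[of "x - y" j] by auto
  then have "g x $ i \<le> g y $ i + supnorm (x - y)" "g y $ i \<le> g x $ i + supnorm (x - y)"
    using topical_le_add_cvec[OF assms] by blast+
  then show ?thesis
    by linarith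
qed

lemma topical_lipschitz:
  assumes "topical g"
  shows "(real CARD('n))-lipschitz_on UNIV (g :: real ^ 'n \<Rightarrow> real ^ 'n)"
proof (rule lipschitz_onI)
  fix x y :: "real ^ 'n"
  have "dist (g x) (g y) \<le> (\<Sum>i\<in>UNIV. \<bar>(g x - g y) $ i\<bar>)"
    unfolding dist_norm by (rule norm_le_l1_cart)
  also have "\<dots> \<le> (\<Sum>i\<in>(UNIV :: 'n set). dist x y)"
  proof (rule sum_mono)
    fix i
    have "\<bar>g x $ i - g y $ i\<bar> \<le> dist x y"
      using topical_nonexpansive[OF assms] supnorm_le_norm[of "x - y"]
      unfolding dist_norm by (rule order_trans)
    then show "\<bar>(g x - g y) $ i\<bar> \<le> dist x y"
      by simp
  qed
  finally show "dist (g x) (g y) \<le> real CARD('n) * dist x y"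
    by simp
qed simp

lemma topical_continuous: "topical g \<Longrightarrow> continuous_on UNIV g"
  using lipschitz_on_continuous_on topical_lipschitz by blast

lemma LIMSEQ_vec_SUP:
  fixes X :: "nat \<Rightarrow> real ^ 'n"
  assumes "\<And>k i. X k $ i \<le> X (Suc k) $ i" "\<And>k i. X k $ i \<le> C"
  shows "X \<longlonglongrightarrow> (\<chi> i. SUP k. X k $ i)"
proof (rule vec_tendstoI)
  fix i
  have "incseq (\<lambda>k. X k $ i)"
    using assms(1) by (rule incseq_SucI)
  moreover have "bdd_above (range (\<lambda>k. X k $ i))"
    using assms(2) by (intro bdd_aboveI2)
  ultimately show "(\<lambda>k. X k $ i) \<longlonglongrightarrow> (\<chi> i. SUP k. X k $ i) $ i"
    using LIMSEQ_incseq_SUP by simp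
qed

lemma LIMSEQ_vec_INF:
  fixes X :: "nat \<Rightarrow> real ^ 'n"
  assumes "\<And>k i. X (Suc k) $ i \<le> X k $ i" "\<And>k i. C \<le> X k $ i"
  shows "X \<longlonglongrightarrow> (\<chi> i. INF k. X k $ i)"
proof (rule vec_tendstoI)
  fix i
  have "decseq (\<lambda>k. X k $ i)"
    using assms(1) by (rule decseq_SucI)
  moreover have "bdd_below (range (\<lambda>k. X k $ i))"
    using assms(2) by (intro bdd_belowI2)
  ultimately show "(\<lambda>k. X k $ i) \<longlonglongrightarrow> (\<chi> i. INF k. X k $ i) $ i"
    using LIMSEQ_decseq_INF by simp
qed

lemma topical_fixed_point_of_subfixed_point:
  fixes g :: "real ^ 'n \<Rightarrow> real ^ 'n"
  assumes g: "topical g"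
    and subfixed: "\<And>i. z $ i \<le> g z $ i"
    and bounded: "\<And>k i. (g ^^ k) z $ i \<le> C"
  shows "\<exists>w. g w = w"
proof -
  define b where "b k = (g ^^ k) z" for k
  have b_Suc: "b (Suc k) = g (b k)" for k
    by (simp add: b_def)
  have b_inc: "b k $ i \<le> b (Suc k) $ i" for k i
  proof (induction k arbitrary: i)
    case 0
    then show ?case using subfixed by (simp add: b_def)
  next
    case (Suc k)
    then show ?case
      unfolding b_Suc[of "Suc k"] b_Suc[of k] by (rule topical_mono[OF g])
  qed
  define w where "w = (\<chi> i. SUP k. b k $ i)"
  have lim: "b \<longlonglongrightarrow> w"
    unfolding w_def using b_inc bounded by (intro LIMSEQ_vec_SUP) (auto simp: b_def)
  have "(\<lambda>k. g (b k)) \<longlonglongrightarrow> g w"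
    using continuous_on_tendsto_compose[OF topical_continuous[OF g] lim] by simp
  moreover have "(\<lambda>k. g (b k)) \<longlonglongrightarrow> w"
    using LIMSEQ_Suc[OF lim] by (simp add: b_Suc)
  ultimately have "g w = w"
    by (rule LIMSEQ_unique)
  then show ?thesis ..
qed

lemma topical_subfixed_point_of_bounded_orbit:
  fixes g :: "real ^ 'n \<Rightarrow> real ^ 'n"
  assumes g: "topical g" and bounded: "\<And>k i. \<bar>(g ^^ k) x $ i\<bar> \<le> B"
  obtains z where "\<And>i. z $ i \<le> g z $ i" and "\<And>k i. (g ^^ k) z $ i \<le> 3 * B"
proof -
  define s where "s m = (\<chi> i. SUP k\<in>{m..}. (g ^^ k) x $ i)" for m
  have s_nth: "s m $ i = (SUP k\<in>{m..}. (g ^^ k) x $ i)" for m i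
    by (simp add: s_def)
  have bdd: "bdd_above ((\<lambda>k. (g ^^ k) x $ i) ` {m..})" for m i
    using bounded by (intro bdd_aboveI2[of _ _ B]) (simp add: abs_le_iff)
  have orbit_le_s: "(g ^^ k) x $ i \<le> s m $ i" if "m \<le> k" for k m i
    unfolding s_nth by (rule cSUP_upper[OF _ bdd]) (simp add: that)
  have s_le: "s m $ i \<le> B" for m i
    unfolding s_nth using bounded by (intro cSUP_least) (auto simp: abs_le_iff)
  have s_ge: "- B \<le> s m $ i" for m i
    using orbit_le_s[of m m i] bounded[of m i] by linarith
  have s_dec: "s (Suc m) $ i \<le> s m $ i" for m i
    unfolding s_nth by (rule cSUP_subset_mono[OF _ bdd]) auto
  have s_subfixed: "s (Suc m) $ i \<le> g (s m) $ i" for m i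
    unfolding s_nth[of "Suc m"]
  proof (rule cSUP_least)
    fix k assume "k \<in> {Suc m..}"
    then obtain k' where k': "k = Suc k'" "m \<le> k'"
      by (cases k) auto
    show "(g ^^ k) x $ i \<le> g (s m) $ i"
      unfolding k' funpow.simps comp_apply by (rule topical_mono[OF g orbit_le_s[OF k'(2)]])
  qed simp
  define z where "z = (\<chi> i. INF m. s m $ i)"
  have lim: "s \<longlonglongrightarrow> z"
    unfolding z_def using s_dec s_ge by (rule LIMSEQ_vec_INF)
  have "z $ i \<le> g z $ i" for i
  proof (rule tendsto_le[OF sequentially_bot])
    show "(\<lambda>m. g (s m) $ i) \<longlonglongrightarrow> g z $ i"
      using continuous_on_tendsto_compose[OF topical_continuous[OF g] lim]
      by (auto intro: tendsto_vec_nth)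
    show "(\<lambda>m. s (Suc m) $ i) \<longlonglongrightarrow> z $ i"
      using LIMSEQ_Suc[OF lim] by (rule tendsto_vec_nth)
    show "\<forall>\<^sub>F m in sequentially. s (Suc m) $ i \<le> g (s m) $ i"
      using s_subfixed by simp
  qed
  moreover have "(g ^^ k) z $ i \<le> 3 * B" for k i
  proof -
    have z_le: "z $ j \<le> B" for j
      by (rule tendsto_upperbound[OF tendsto_vec_nth[OF lim]]) (simp_all add: s_le)
    have "z $ j \<le> x $ j + 2 * B" for j
      using z_le[of j] bounded[of 0 j] by (simp add: abs_le_iff)
    then have "(g ^^ k) z $ i \<le> (g ^^ k) x $ i + 2 * B"
      by (rule topical_funpow_le_add_cvec[OF g])
    then show ?thesis
      using bounded[of k i] by (simp add: abs_le_iff)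
  qed
  ultimately show ?thesis
    using that by blast
qed

lemma topical_fixed_point_of_bounded_orbit:
  fixes g :: "real ^ 'n \<Rightarrow> real ^ 'n"
  assumes "topical g" "\<And>k i. \<bar>(g ^^ k) x $ i\<bar> \<le> B"
  shows "\<exists>w. g w = w"
  using topical_subfixed_point_of_bounded_orbit[OF assms]
    topical_fixed_point_of_subfixed_point[OF assms(1)] by metis

theorem lemma3p1:
  fixes f :: "real ^ 'n \<Rightarrow> real ^ 'n" and h :: real
  assumes "topical f"
  shows "(\<exists>v. f v = v + cvec h) \<longleftrightarrow>
         (\<exists>x. \<exists>B. \<forall>k::nat. supnorm ((f ^^ k) x - cvec (real k * h)) \<le> B)"
proof -
  define g where "g y = f y - cvec h" for y
  have g: "topical g"
    unfolding g_def[abs_def] using assms by (rule topical_minus_cvec)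
  have orbit: "(g ^^ k) x = (f ^^ k) x - cvec (real k * h)" for k x
    unfolding g_def[abs_def] using assms by (rule funpow_topical_minus_cvec)
  have eigen_iff_fixed: "f v = v + cvec h \<longleftrightarrow> g v = v" for v
    by (simp add: g_def diff_eq_eq)
  show ?thesis
  proof
    assume "\<exists>v. f v = v + cvec h"
    then obtain v where "g v = v"
      using eigen_iff_fixed by blast
    then have "(g ^^ k) v = v" for k
      by (induction k) simp_all
    then show "\<exists>x B. \<forall>k. supnorm ((f ^^ k) x - cvec (real k * h)) \<le> B"
      by (metis orbit order_refl)
  next
    assume "\<exists>x B. \<forall>k. supnorm ((f ^^ k) x - cvec (real k * h)) \<le> B"
    then obtain x B where "supnorm ((g ^^ k) x) \<le> B" for k
      by (auto simp: orbit)
    then have "\<bar>(g ^^ k) x $ i\<bar> \<le> B" for k i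
      using supnorm_nth_le order_trans by blast
    then show "\<exists>v. f v = v + cvec h"
      using topical_fixed_point_of_bounded_orbit[OF g] eigen_iff_fixed by blast
  qed
qed

end
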